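(* For every $\delta_0>0$, every $c_0\in(0,1)$ and every $\varepsilon>0$ there exists $\kappa=\kappa(\delta_0,\varepsilon,c_0)>0$ with the following property. Let $n\in\mathbb N$, let $P$ be an algebraic polynomial of degree at most $n$ with $\|P\|_{[-1,1]}\le 1$, and let $\delta\ge\delta_0$ and $c_0\le c<1$ be such that $0<\varepsilon<\frac{1-c}{2-c}$. Suppose $E\subset[-1,1]$ is a measurable set with $|E|<\kappa$ and $\|P\|_E\le e^{-\delta n}$, and suppose $I$ is an interval with $E\subset I\subset[-1,1]$ and $$|I|\le |E|^{\frac{1}{2-c}+\varepsilon}.$$ Then $\|P\|_I\le e^{-c\delta n}$.
   Context: For a set $F$, $\|g\|_F=\sup_{x\in F}|g(x)|$ denotes the uniform norm on $F$; $|\cdot|$ denotes Lebesgue measure (length). *)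

theory Defs
  imports "HOL-Analysis.Analysis" "HOL-Computational_Algebra.Polynomial"
begin

definition unif_norm :: "real poly \<Rightarrow> real set \<Rightarrow> real" where
  "unif_norm P F = (SUP x\<in>F. \<bar>poly P x\<bar>)"

end

theory Submission
  imports Defs
begin

text \<open>
  Let \<open>I \<subseteq> [a, b]\<close> with \<open>b - a \<le> |E|^p\<close>, \<open>p = 1/(2 - c) + \<epsilon>\<close>, and fix \<open>x \<in> [a, b]\<close>.
  Interpolate \<open>P\<close> at \<open>n + 1\<close> nodes: \<open>k + 1\<close> points of the closure of \<open>E\<close> with mutual distances
  at least \<open>|E| / (k + 1)\<close> (levels of the distribution function \<open>t \<mapsto> |E \<inter> (-\<infinity>, t]|\<close>), where
  \<open>|P| \<le> e^{-\<delta> n}\<close>, and the \<open>n - k\<close> extremal points of a Chebyshev polynomial on a window of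
  length \<open>1/2\<close> inside \<open>[-1, 1]\<close> at distance \<open>d = |E|^{\<epsilon>/2}\<close> from \<open>[a, b]\<close>, where \<open>|P| \<le> 1\<close>.
  On the first group the Lagrange basis has total size at most \<open>(2 e |I| / |E|)^k\<close>; on the second
  it sums to a Chebyshev polynomial evaluated just outside the window, which is \<open>e^{O(n |E|^{\<epsilon>/4})}\<close>.
  Hence \<open>|P(x)| \<le> e^{-\<delta> n} (2 e |I| / |E|)^k e^{n |I| / d} + (|I| / d)^{k + 1} e^{O(n |E|^{\<epsilon>/4})}\<close>,
  and \<open>k \<approx> c \<delta> n / ((c + \<epsilon>/2) log (1/|E|))\<close> makes both terms at most \<open>e^{-c \<delta> n} / 2\<close> once \<open>|E|\<close>
  is small enough; when \<open>\<delta> n\<close> is bounded, \<open>k = 0\<close> already works.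
\<close>

section \<open>Lagrange interpolation\<close>

definition lagrange_basis :: "('i \<Rightarrow> real) \<Rightarrow> 'i set \<Rightarrow> 'i \<Rightarrow> real \<Rightarrow> real" where
  "lagrange_basis z A i x = (\<Prod>j\<in>A - {i}. (x - z j) / (z i - z j))"

lemma lagrange_basis_node:
  assumes "finite A" "inj_on z A" "i \<in> A" "i' \<in> A"
  shows "lagrange_basis z A i (z i') = (if i = i' then 1 else 0)"
proof (cases "i = i'")
  case True
  then show ?thesis
    using assms unfolding lagrange_basis_def by (auto intro!: prod.neutral simp: inj_on_eq_iff)
next
  case False
  then show ?thesis
    using assms unfolding lagrange_basis_def by (auto intro!: prod_zero)
qed

lemma lagrange_interpolation:
  fixes p :: "real poly"
  assumes fin: "finite A" and inj: "inj_on z A" and deg: "degree p < card A"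
  shows "poly p x = (\<Sum>i\<in>A. poly p (z i) * lagrange_basis z A i x)"
proof -
  define q where
    "q = (\<Sum>i\<in>A. smult (poly p (z i)) (\<Prod>j\<in>A - {i}. smult (1 / (z i - z j)) [:- z j, 1:]))"
  have poly_q: "poly q y = (\<Sum>i\<in>A. poly p (z i) * lagrange_basis z A i y)" for y
    unfolding q_def lagrange_basis_def by (simp add: poly_sum poly_prod diff_divide_distrib[symmetric])
  have "degree q \<le> card A - 1"
    unfolding q_def
  proof (intro degree_sum_le fin order_trans[OF degree_smult_le])
    fix i assume "i \<in> A"
    have linear: "degree (smult t [:- s, 1:]) \<le> 1" for s t :: real
      by (rule order_trans[OF degree_smult_le]) simp
    have "degree (\<Prod>j\<in>A - {i}. smult (1 / (z i - z j)) [:- z j, 1:])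
        \<le> (\<Sum>j\<in>A - {i}. degree (smult (1 / (z i - z j)) [:- z j, 1:]))"
      using degree_prod_sum_le[of "A - {i}" "\<lambda>j. smult (1 / (z i - z j)) [:- z j, 1:]"] fin
      by (simp only: o_def finite_Diff)
    also have "\<dots> \<le> (\<Sum>j\<in>A - {i}. 1)"
      by (rule sum_mono) (rule linear)
    also have "\<dots> = card A - 1" using \<open>i \<in> A\<close> fin by simp
    finally show "degree (\<Prod>j\<in>A - {i}. smult (1 / (z i - z j)) [:- z j, 1:]) \<le> card A - 1" .
  qed
  with deg have "degree q < card (z ` A)" by (simp add: card_image[OF inj])
  moreover have "poly p s = poly q s" if "s \<in> z ` A" for s
  proof -
    from that obtain i' where i': "i' \<in> A" "s = z i'" by blast
    have "poly q s = (\<Sum>i\<in>A. if i = i' then poly p (z i) else 0)"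
      unfolding poly_q i' using fin inj i' by (intro sum.cong) (auto simp: lagrange_basis_node)
    then show ?thesis using fin i' by simp
  qed
  ultimately have "p = q" using deg by (intro poly_eqI_degree[of "z ` A"]) (simp_all add: card_image[OF inj])
  then show ?thesis unfolding poly_q[symmetric] by simp
qed

lemma lagrange_basis_Un:
  assumes "finite A" "finite B" "A \<inter> B = {}"
  shows "lagrange_basis z (A \<union> B) i x = lagrange_basis z A i x * lagrange_basis z B i x"
proof -
  have "(A \<union> B) - {i} = (A - {i}) \<union> (B - {i})" by blast
  then show ?thesis
    unfolding lagrange_basis_def by (simp only:) (rule prod.union_disjoint; use assms in blast)
qed

lemma lagrange_basis_image:
  assumes "inj f"
  shows "lagrange_basis z (f ` A) (f i) x = lagrange_basis (z \<circ> f) A i x"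
proof -
  have "f ` A - {f i} = f ` (A - {i})" using assms by (auto dest: injD)
  then show ?thesis
    unfolding lagrange_basis_def using assms by (simp add: prod.reindex inj_on_subset[OF assms])
qed

lemma lagrange_basis_not_mem:
  "i \<notin> A \<Longrightarrow> lagrange_basis z A i x = (\<Prod>j\<in>A. (x - z j) / (z i - z j))"
  unfolding lagrange_basis_def by simp

lemma lagrange_basis_affine:
  assumes "\<beta> \<noteq> 0"
  shows "lagrange_basis (\<lambda>j. \<alpha> + \<beta> * w j) A i (\<alpha> + \<beta> * X) = lagrange_basis w A i X"
  unfolding lagrange_basis_def
proof (rule prod.cong)
  fix j
  have "\<alpha> + \<beta> * X - (\<alpha> + \<beta> * w j) = \<beta> * (X - w j)" "\<alpha> + \<beta> * w i - (\<alpha> + \<beta> * w j) = \<beta> * (w i - w j)"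
    by (simp_all add: algebra_simps)
  then show "(\<alpha> + \<beta> * X - (\<alpha> + \<beta> * w j)) / (\<alpha> + \<beta> * w i - (\<alpha> + \<beta> * w j)) = (X - w j) / (w i - w j)"
    using assms by simp
qed simp

lemma abs_poly_le_two_node_groups:
  fixes P :: "real poly" and xs :: "'a \<Rightarrow> real" and ys :: "'b \<Rightarrow> real"
  assumes fin: "finite B" "finite C" and inj: "inj_on xs B" "inj_on ys C"
    and disj: "\<And>i j. i \<in> B \<Longrightarrow> j \<in> C \<Longrightarrow> xs i \<noteq> ys j"
    and deg: "degree P < card B + card C"
  shows "\<bar>poly P x\<bar> \<le>
      (\<Sum>i\<in>B. \<bar>poly P (xs i)\<bar> * \<bar>lagrange_basis xs B i x\<bar> * (\<Prod>j\<in>C. \<bar>x - ys j\<bar> / \<bar>xs i - ys j\<bar>))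
    + (\<Sum>j\<in>C. \<bar>poly P (ys j)\<bar> * \<bar>lagrange_basis ys C j x\<bar> * (\<Prod>i\<in>B. \<bar>x - xs i\<bar> / \<bar>ys j - xs i\<bar>))"
proof -
  define z where "z = case_sum xs ys"
  define A where "A = Inl ` B \<union> Inr ` C"
  have finA: "finite (Inl ` B)" "finite (Inr ` C)" using fin by auto
  have disjA: "Inl ` B \<inter> Inr ` C = {}" by blast
  have cardA: "card A = card B + card C"
    unfolding A_def using fin by (simp add: card_Un_disjoint disjA card_image)
  have "inj_on z (Inl ` B)" "inj_on z (Inr ` C)"
    using inj by (auto intro!: inj_on_imageI simp: z_def o_def)
  moreover have "z ` Inl ` B \<inter> z ` Inr ` C = {}"
    using disj by (force simp: z_def)
  ultimately have injA: "inj_on z A"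
    unfolding A_def by (auto simp: inj_on_Un)
  have z_Inl: "z \<circ> Inl = xs" and z_Inr: "z \<circ> Inr = ys"
    by (simp_all add: z_def fun_eq_iff)
  have C_factor: "lagrange_basis z (Inr ` C) (Inl i) x = (\<Prod>j\<in>C. (x - ys j) / (xs i - ys j))" for i
    by (subst lagrange_basis_not_mem) (auto simp: prod.reindex z_def)
  have B_factor: "lagrange_basis z (Inl ` B) (Inr j) x = (\<Prod>i\<in>B. (x - xs i) / (ys j - xs i))" for j
    by (subst lagrange_basis_not_mem) (auto simp: prod.reindex z_def)
  have left: "lagrange_basis z A (Inl i) x = lagrange_basis xs B i x * (\<Prod>j\<in>C. (x - ys j) / (xs i - ys j))" for i
    unfolding A_def lagrange_basis_Un[OF finA disjA] lagrange_basis_image[OF inj_Inl] z_Inl C_factor ..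
  have right: "lagrange_basis z A (Inr j) x = lagrange_basis ys C j x * (\<Prod>i\<in>B. (x - xs i) / (ys j - xs i))" for j
    unfolding A_def lagrange_basis_Un[OF finA disjA] lagrange_basis_image[OF inj_Inr] z_Inr B_factor
    by (rule mult.commute)
  have "poly P x = (\<Sum>i\<in>A. poly P (z i) * lagrange_basis z A i x)"
    using deg fin cardA injA unfolding A_def by (intro lagrange_interpolation) auto
  also have "\<dots> = (\<Sum>i\<in>B. poly P (xs i) * lagrange_basis z A (Inl i) x)
                 + (\<Sum>j\<in>C. poly P (ys j) * lagrange_basis z A (Inr j) x)"
    unfolding A_def sum.union_disjoint[OF finA disjA] by (simp add: sum.reindex z_def)
  finally have "\<bar>poly P x\<bar> \<le> \<bar>\<Sum>i\<in>B. poly P (xs i) * lagrange_basis z A (Inl i) x\<bar>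
                 + \<bar>\<Sum>j\<in>C. poly P (ys j) * lagrange_basis z A (Inr j) x\<bar>"
    by (simp only: abs_triangle_ineq)
  also have "\<dots> \<le> (\<Sum>i\<in>B. \<bar>poly P (xs i) * lagrange_basis z A (Inl i) x\<bar>)
                 + (\<Sum>j\<in>C. \<bar>poly P (ys j) * lagrange_basis z A (Inr j) x\<bar>)"
    by (intro add_mono sum_abs)
  finally show ?thesis by (simp add: left right abs_mult abs_prod mult.assoc)
qed

section \<open>Chebyshev polynomials\<close>

fun cheb_poly :: "nat \<Rightarrow> real poly" where
  "cheb_poly 0 = 1"
| "cheb_poly (Suc 0) = [:0, 1:]"
| "cheb_poly (Suc (Suc n)) = [:0, 2:] * cheb_poly (Suc n) - cheb_poly n"

lemma degree_cheb_poly: "degree (cheb_poly n) \<le> n"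
proof (induction n rule: cheb_poly.induct)
  case (3 n)
  have "degree ([:0, 2:] * cheb_poly (Suc n)) \<le> Suc (Suc n)"
    using degree_mult_le[of "[:0, 2:]" "cheb_poly (Suc n)"] 3(1) by simp
  then show ?case using 3(2) by (simp add: degree_diff_le)
qed auto

lemma poly_cheb_poly_cos: "poly (cheb_poly n) (cos t) = cos (real n * t)"
proof (induction n rule: cheb_poly.induct)
  case (3 n)
  have "cos (real (Suc (Suc n)) * t) + cos (real n * t) = 2 * cos t * cos (real (Suc n) * t)"
    using cos_add[of "real (Suc n) * t" t] cos_diff[of "real (Suc n) * t" t]
    by (simp add: algebra_simps)
  then show ?case using 3 by (simp add: algebra_simps)
qed auto

lemma poly_cheb_poly_ge_one:
  fixes y :: real
  assumes "1 \<le> y"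
  shows "poly (cheb_poly n) y = ((y + sqrt (y\<^sup>2 - 1)) ^ n + (y - sqrt (y\<^sup>2 - 1)) ^ n) / 2"
proof -
  define r s where "r = y + sqrt (y\<^sup>2 - 1)" and "s = y - sqrt (y\<^sup>2 - 1)"
  have rs: "r * s = 1" and r_plus_s: "r + s = 2 * y"
    using assms by (simp_all add: r_def s_def algebra_simps power2_eq_square[symmetric])
  have "poly (cheb_poly n) y = (r ^ n + s ^ n) / 2"
  proof (induction n rule: cheb_poly.induct)
    case (3 n)
    have "poly (cheb_poly (Suc (Suc n))) y = 2 * y * poly (cheb_poly (Suc n)) y - poly (cheb_poly n) y"
      by simp
    also have "\<dots> = ((r + s) * (r ^ Suc n + s ^ Suc n) - r * s * (r ^ n + s ^ n)) / 2"
      unfolding 3 rs r_plus_s by (simp add: field_simps)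
    also have "\<dots> = (r ^ Suc (Suc n) + s ^ Suc (Suc n)) / 2"
      by (simp add: algebra_simps)
    finally show ?case .
  qed (simp_all add: r_plus_s)
  then show ?thesis by (simp add: r_def s_def)
qed

lemma abs_poly_cheb_poly_le:
  fixes y :: real
  assumes "1 \<le> y"
  shows "\<bar>poly (cheb_poly n) y\<bar> \<le> (y + sqrt (y\<^sup>2 - 1)) ^ n"
proof -
  have "1 \<le> y\<^sup>2" "sqrt (y\<^sup>2 - 1) \<le> y" using assms by (simp_all add: one_le_power real_sqrt_le_iff')
  then have "0 \<le> (y - sqrt (y\<^sup>2 - 1)) ^ n" "(y - sqrt (y\<^sup>2 - 1)) ^ n \<le> (y + sqrt (y\<^sup>2 - 1)) ^ n"
    by (auto intro!: power_mono)
  then show ?thesis by (simp add: poly_cheb_poly_ge_one[OF assms])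
qed

definition cheb_node :: "nat \<Rightarrow> nat \<Rightarrow> real" where
  "cheb_node N j = cos (real j * pi / real N)"

lemma abs_cheb_node_le: "\<bar>cheb_node N j\<bar> \<le> 1"
  by (simp add: cheb_node_def)

lemma cheb_node_strict_antimono:
  assumes "i < j" "j \<le> N"
  shows "cheb_node N j < cheb_node N i"
  unfolding cheb_node_def
proof (rule cos_monotone_0_pi)
  have "0 < real N" using assms by simp
  then show "real i * pi / real N < real j * pi / real N" "real j * pi / real N \<le> pi"
    using assms by (simp_all add: divide_strict_right_mono field_simps)
qed simp

lemma poly_cheb_poly_cheb_node:
  assumes "j \<le> N"
  shows "poly (cheb_poly N) (cheb_node N j) = (-1) ^ j"
  using assms by (cases "N = 0") (simp_all add: cheb_node_def poly_cheb_poly_cos)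

lemma inj_on_cheb_node: "inj_on (cheb_node N) {..N}"
  by (rule inj_onI) (metis atMost_iff cheb_node_strict_antimono less_irrefl nat_neq_iff)

lemma sum_abs_lagrange_basis_cheb_node:
  fixes X :: real
  assumes X: "1 \<le> X"
  shows "(\<Sum>j\<le>N. \<bar>lagrange_basis (cheb_node N) {..N} j X\<bar>) \<le> (X + sqrt (X\<^sup>2 - 1)) ^ N"
proof -
  let ?l = "\<lambda>j. lagrange_basis (cheb_node N) {..N} j X"
  have sign: "\<bar>?l i\<bar> = (-1) ^ i * ?l i" if "i \<le> N" for i
  proof -
    define f where "f j = (X - cheb_node N j) / (cheb_node N i - cheb_node N j)" for j
    have "f j \<le> 0" if "j < i" for j
      unfolding f_def using cheb_node_strict_antimono[OF that \<open>i \<le> N\<close>] X abs_cheb_node_le[of N j]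
      by (intro divide_nonneg_neg) auto
    then have left: "0 \<le> (\<Prod>j<i. - f j)" by (intro prod_nonneg) simp
    have "0 \<le> f j" if "j \<in> {i<..N}" for j
      using cheb_node_strict_antimono[of i j N] that X abs_cheb_node_le[of N j]
      by (auto simp: f_def)
    then have right: "0 \<le> (\<Prod>j\<in>{i<..N}. f j)" by (intro prod_nonneg) simp
    have "{..N} - {i} = {..<i} \<union> {i<..N}" using that by auto
    then have "?l i = (\<Prod>j \<in> {..<i} \<union> {i<..N}. f j)"
      by (simp add: lagrange_basis_def f_def)
    also have "\<dots> = (\<Prod>j<i. f j) * (\<Prod>j\<in>{i<..N}. f j)"
      by (rule prod.union_disjoint) auto
    finally have "?l i = (\<Prod>j<i. f j) * (\<Prod>j\<in>{i<..N}. f j)" .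
    then have "(-1) ^ i * ?l i = (\<Prod>j<i. - f j) * (\<Prod>j\<in>{i<..N}. f j)"
      by (simp add: prod_uminus)
    with left right have "0 \<le> (-1) ^ i * ?l i" by simp
    moreover have "\<bar>?l i\<bar> = \<bar>(-1) ^ i * ?l i\<bar>" by (simp add: abs_mult)
    ultimately show ?thesis by simp
  qed
  have "(\<Sum>j\<le>N. \<bar>?l j\<bar>) = (\<Sum>j\<le>N. poly (cheb_poly N) (cheb_node N j) * ?l j)"
    by (intro sum.cong) (simp_all add: sign poly_cheb_poly_cheb_node)
  also have "\<dots> = poly (cheb_poly N) X"
    by (rule lagrange_interpolation[symmetric])
      (use inj_on_cheb_node degree_cheb_poly[of N] in \<open>auto simp: le_imp_less_Suc\<close>)
  also have "\<dots> \<le> (X + sqrt (X\<^sup>2 - 1)) ^ N"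
    using abs_poly_cheb_poly_le[OF X, of N] by simp
  finally show ?thesis .
qed

lemma chebyshev_growth_le_exp:
  fixes X \<tau> :: real
  assumes X: "1 \<le> X" "X \<le> 1 + \<tau>" and \<tau>: "\<tau> \<le> 1"
  shows "X + sqrt (X\<^sup>2 - 1) \<le> exp (\<tau> + sqrt (3 * \<tau>))"
proof -
  have "X\<^sup>2 - 1 \<le> (1 + \<tau>)\<^sup>2 - 1" using X by (intro diff_right_mono power_mono) auto
  also have "\<dots> \<le> 3 * \<tau>"
    using X \<tau> mult_left_le_one_le[of \<tau> \<tau>] by (simp add: power2_eq_square algebra_simps)
  finally have "sqrt (X\<^sup>2 - 1) \<le> sqrt (3 * \<tau>)" by (rule real_sqrt_le_mono)
  then have "X + sqrt (X\<^sup>2 - 1) \<le> 1 + (\<tau> + sqrt (3 * \<tau>))" using X by linarith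
  also have "\<dots> \<le> exp (\<tau> + sqrt (3 * \<tau>))" by (rule exp_ge_add_one_self[simplified add.commute])
  finally show ?thesis .
qed

lemma sum_abs_lagrange_basis_far_nodes:
  fixes ctr \<sigma> x \<tau> :: real
  assumes \<sigma>: "\<bar>\<sigma>\<bar> = 1" and X: "1 \<le> 4 * \<sigma> * (x - ctr)" "4 * \<sigma> * (x - ctr) \<le> 1 + \<tau>" and \<tau>: "\<tau> \<le> 1"
  shows "(\<Sum>j\<le>N. \<bar>lagrange_basis (\<lambda>j. ctr + \<sigma> / 4 * cheb_node N j) {..N} j x\<bar>)
    \<le> exp (real N * (\<tau> + sqrt (3 * \<tau>)))"
proof -
  define X where "X = 4 * \<sigma> * (x - ctr)"
  have x: "x = ctr + \<sigma> / 4 * X" using \<sigma> by (auto simp: X_def abs_if split: if_splits)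
  have "lagrange_basis (\<lambda>j. ctr + \<sigma> / 4 * cheb_node N j) {..N} j x = lagrange_basis (cheb_node N) {..N} j X" for j
    unfolding x using \<sigma> by (intro lagrange_basis_affine) auto
  then have "(\<Sum>j\<le>N. \<bar>lagrange_basis (\<lambda>j. ctr + \<sigma> / 4 * cheb_node N j) {..N} j x\<bar>)
      = (\<Sum>j\<le>N. \<bar>lagrange_basis (cheb_node N) {..N} j X\<bar>)"
    by simp
  also have "\<dots> \<le> (X + sqrt (X\<^sup>2 - 1)) ^ N"
    using X by (intro sum_abs_lagrange_basis_cheb_node) (simp add: X_def)
  also have "\<dots> \<le> exp (\<tau> + sqrt (3 * \<tau>)) ^ N"
    using X \<tau> by (intro power_mono chebyshev_growth_le_exp) (auto simp: X_def)
  also have "\<dots> = exp (real N * (\<tau> + sqrt (3 * \<tau>)))" by (simp flip: exp_of_nat_mult)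
  finally show ?thesis .
qed

lemma prod_lessThan_diff_eq_fact: "(\<Prod>j<i. real i - real j) = fact i"
proof (induction i)
  case (Suc i)
  have "(\<Prod>j<Suc i. real (Suc i) - real j) = (real (Suc i) - real 0) * (\<Prod>j<i. real (Suc i) - real (Suc j))"
    by (rule prod.lessThan_Suc_shift)
  then show ?case using Suc by simp
qed simp

lemma prod_abs_diff_atMost_eq_fact:
  assumes "i \<le> k"
  shows "(\<Prod>j\<in>{..k} - {i}. \<bar>real i - real j\<bar>) = fact i * fact (k - i)"
  using assms
proof (induction k)
  case (Suc k)
  show ?case
  proof (cases "i = Suc k")
    case True
    then have "{..Suc k} - {i} = {..<i}" by auto
    moreover have "(\<Prod>j<i. \<bar>real i - real j\<bar>) = (\<Prod>j<i. real i - real j)" by (rule prod.cong) auto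
    ultimately show ?thesis using True prod_lessThan_diff_eq_fact[of i] by simp
  next
    case False
    then have "i \<le> k" "{..Suc k} - {i} = insert (Suc k) ({..k} - {i})" using Suc.prems by auto
    then show ?thesis
      using Suc.IH by (simp add: of_nat_diff Suc_diff_le algebra_simps)
  qed
qed simp

lemma sum_inverse_fact_mult_fact: "(\<Sum>i\<le>k. 1 / (fact i * fact (k - i) :: real)) = 2 ^ k / fact k"
proof -
  have "(\<Sum>i\<le>k. 1 / (fact i * fact (k - i) :: real)) = (\<Sum>i\<le>k. real (k choose i) / fact k)"
    by (intro sum.cong) (simp_all add: binomial_fact)
  also have "\<dots> = real (\<Sum>i\<le>k. k choose i) / fact k"
    by (simp add: sum_divide_distrib)
  also have "\<dots> = 2 ^ k / fact k" by (simp add: choose_row_sum)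
  finally show ?thesis .
qed

lemma Suc_power_le_exp_fact: "real (Suc k) ^ k \<le> exp 1 ^ k * fact k"
proof (induction k)
  case (Suc k)
  have "(1 + 1 / real (Suc k)) ^ Suc k \<le> exp (1 / real (Suc k)) ^ Suc k"
    by (intro power_mono) (auto simp: add.commute)
  also have "\<dots> = exp (real (Suc k) * (1 / real (Suc k)))" by (simp only: exp_of_nat_mult)
  also have "\<dots> = exp 1" by simp
  finally have e: "(1 + 1 / real (Suc k)) ^ Suc k \<le> exp 1" .
  have "real (Suc (Suc k)) = real (Suc k) * (1 + 1 / real (Suc k))" by (simp add: field_simps)
  then have "real (Suc (Suc k)) ^ Suc k = real (Suc k) * real (Suc k) ^ k * (1 + 1 / real (Suc k)) ^ Suc k"
    by (simp add: power_mult_distrib)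
  also have "\<dots> \<le> real (Suc k) * (exp 1 ^ k * fact k) * exp 1"
    by (intro mult_mono mult_left_mono Suc.IH e) auto
  also have "\<dots> = exp 1 ^ Suc k * fact (Suc k)" by (simp add: algebra_simps)
  finally show ?case .
qed simp

lemma sum_abs_lagrange_basis_spaced_nodes:
  fixes xs :: "nat \<Rightarrow> real"
  assumes xs: "\<And>i. i \<le> k \<Longrightarrow> xs i \<in> {a..b}" and x: "x \<in> {a..b}" and m: "0 < m"
    and gaps: "\<And>i j. i \<le> k \<Longrightarrow> j \<le> k \<Longrightarrow> \<bar>real i - real j\<bar> * (m / real (Suc k)) \<le> \<bar>xs i - xs j\<bar>"
  shows "(\<Sum>i\<le>k. \<bar>lagrange_basis xs {..k} i x\<bar>) \<le> (2 * exp 1 * (b - a) / m) ^ k"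
proof -
  define r where "r = (b - a) * real (Suc k) / m"
  have r: "0 \<le> r" using x m by (simp add: r_def)
  have two_r: "2 * r = 2 * (b - a) / m * real (Suc k)" by (simp add: r_def)
  have "\<bar>lagrange_basis xs {..k} i x\<bar> \<le> r ^ k * (1 / (fact i * fact (k - i)))" if "i \<le> k" for i
  proof -
    have "\<bar>lagrange_basis xs {..k} i x\<bar> \<le> (\<Prod>j\<in>{..k} - {i}. r / \<bar>real i - real j\<bar>)"
      unfolding lagrange_basis_def abs_prod
    proof (rule prod_mono)
      fix j assume j: "j \<in> {..k} - {i}"
      then have ij: "0 < \<bar>real i - real j\<bar>" by auto
      have "\<bar>x - xs j\<bar> / \<bar>xs i - xs j\<bar> \<le> (b - a) / (\<bar>real i - real j\<bar> * (m / real (Suc k)))"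
        using xs[of j] x j gaps[of i j] that ij m by (intro frac_le) auto
      then show "0 \<le> \<bar>(x - xs j) / (xs i - xs j)\<bar> \<and> \<bar>(x - xs j) / (xs i - xs j)\<bar> \<le> r / \<bar>real i - real j\<bar>"
        by (simp add: r_def field_simps)
    qed
    also have "\<dots> = r ^ k * (1 / (fact i * fact (k - i)))"
      using that by (simp add: prod_dividef prod_abs_diff_atMost_eq_fact)
    finally show ?thesis .
  qed
  then have "(\<Sum>i\<le>k. \<bar>lagrange_basis xs {..k} i x\<bar>) \<le> (\<Sum>i\<le>k. r ^ k * (1 / (fact i * fact (k - i))))"
    by (intro sum_mono) simp
  also have "\<dots> = (2 * r) ^ k / fact k"
    by (simp only: sum_distrib_left[symmetric] sum_inverse_fact_mult_fact) (simp add: power_mult_distrib)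
  also have "\<dots> = (2 * (b - a) / m) ^ k * (real (Suc k) ^ k / fact k)"
    unfolding two_r power_mult_distrib by simp
  also have "\<dots> \<le> (2 * (b - a) / m) ^ k * exp 1 ^ k"
    using x m Suc_power_le_exp_fact[of k] by (intro mult_left_mono) (auto simp: divide_le_eq)
  also have "\<dots> = (2 * exp 1 * (b - a) / m) ^ k"
    by (simp add: power_mult_distrib[symmetric] algebra_simps)
  finally show ?thesis .
qed

section \<open>Spaced points in a set of positive measure\<close>

lemma lipschitz_on_measure_Int_atMost:
  fixes E :: "real set"
  assumes E: "E \<in> lmeasurable"
  shows "1-lipschitz_on UNIV (\<lambda>t. measure lebesgue (E \<inter> {..t}))"
proof -
  have le: "measure lebesgue (E \<inter> {..t}) \<le> measure lebesgue (E \<inter> {..s}) + (t - s)" if "s \<le> t" for s t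
  proof -
    have Ioc: "{s<..t} \<in> lmeasurable" by (rule fmeasurableI2[of "{s..t}"]) auto
    have parts: "E \<inter> {..s} \<in> lmeasurable" "E \<inter> {s<..t} \<in> lmeasurable"
      by (simp_all add: fmeasurable_Int_fmeasurable[OF E])
    have "E \<inter> {..t} = (E \<inter> {..s}) \<union> (E \<inter> {s<..t})" using that by auto
    then have "measure lebesgue (E \<inter> {..t}) = measure lebesgue (E \<inter> {..s}) + measure lebesgue (E \<inter> {s<..t})"
      by (simp only:) (rule measure_Union; use parts in \<open>auto simp: fmeasurable_def\<close>)
    moreover have "measure lebesgue (E \<inter> {s<..t}) \<le> measure lebesgue {s<..t}"
      by (rule measure_mono_fmeasurable) (use parts Ioc in \<open>auto simp: fmeasurable_def\<close>)
    ultimately show ?thesis using that by simp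
  qed
  have mono: "measure lebesgue (E \<inter> {..s}) \<le> measure lebesgue (E \<inter> {..t})" if "s \<le> t" for s t
  proof (rule measure_mono_fmeasurable)
    show "E \<inter> {..s} \<in> sets lebesgue" "E \<inter> {..t} \<in> lmeasurable"
      by (simp_all add: fmeasurable_Int_fmeasurable[OF E] fmeasurableD)
  qed (use that in auto)
  let ?G = "\<lambda>t. measure lebesgue (E \<inter> {..t})"
  have ordered: "\<bar>?G s - ?G t\<bar> \<le> \<bar>s - t\<bar>" if "s \<le> t" for s t
  proof -
    have "\<bar>s - t\<bar> = t - s" "\<bar>?G s - ?G t\<bar> = ?G t - ?G s" using that mono[OF that] by simp_all
    then show ?thesis using le[OF that] by simp
  qed
  show ?thesis
  proof (rule lipschitz_onI)
    fix s t :: real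
    show "dist (?G s) (?G t) \<le> 1 * dist s t"
      using ordered[of s t] ordered[of t s] by (cases "s \<le> t") (simp_all add: dist_real_def abs_minus_commute)
  qed simp
qed

lemma exists_measure_Int_atMost_eq:
  fixes E :: "real set"
  assumes E: "E \<in> lmeasurable" "E \<subseteq> {a..b}" and v: "0 < v" "v \<le> measure lebesgue E"
  obtains t where "t \<in> closure E" "measure lebesgue (E \<inter> {..t}) = v"
proof -
  let ?G = "\<lambda>t. measure lebesgue (E \<inter> {..t})"
  obtain e where "e \<in> E" using v by force
  then have ab: "a - 1 \<le> b" using E by auto
  have "E \<inter> {..a - 1} = {}" "E \<inter> {..b} = E" using E by auto
  then have "?G (a - 1) \<le> v" "v \<le> ?G b" using v by simp_all
  moreover have "continuous_on {a - 1..b} ?G"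
    using lipschitz_on_measure_Int_atMost[OF E(1)]
    by (rule lipschitz_on_continuous_on[OF lipschitz_on_subset]) simp
  ultimately obtain t0 where t0: "?G t0 = v" using IVT'[of ?G "a - 1" v b] ab by blast
  define S where "S = E \<inter> {..t0}"
  have S: "S \<noteq> {}" "bdd_above S" using t0 v by (auto simp: S_def)
  \<comment> \<open>Moving t0 down to the last point of E below it does not change the measure.\<close>
  have "Sup S \<in> closure E"
    using closure_contains_Sup[OF S] closure_mono[of S E] by (auto simp: S_def)
  moreover have "E \<inter> {..Sup S} = S"
    using S cSup_upper[OF _ S(2)] cSup_least[OF S(1)] by (fastforce simp: S_def)
  ultimately show ?thesis using t0 that by (simp add: S_def)
qed

lemma exists_spaced_nodes:
  fixes E :: "real set"
  assumes E: "E \<in> lmeasurable" "E \<subseteq> {a..b}" and m: "0 < measure lebesgue E"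
  obtains xs :: "nat \<Rightarrow> real" where "\<And>i. i \<le> k \<Longrightarrow> xs i \<in> closure E" and "inj_on xs {..k}"
    and "\<And>i j. i \<le> k \<Longrightarrow> j \<le> k \<Longrightarrow> \<bar>real i - real j\<bar> * (measure lebesgue E / real (Suc k)) \<le> \<bar>xs i - xs j\<bar>"
proof -
  define h where "h = measure lebesgue E / real (Suc k)"
  have "\<exists>t. t \<in> closure E \<and> measure lebesgue (E \<inter> {..t}) = real (Suc i) * h" if "i \<le> k" for i
  proof -
    have "0 < real (Suc i) * h" using m by (simp add: h_def)
    moreover have "real (Suc i) * h \<le> measure lebesgue E" using that m by (simp add: h_def field_simps)
    ultimately show ?thesis using exists_measure_Int_atMost_eq[OF E] by metis
  qed
  then obtain xs where xs: "\<And>i. i \<le> k \<Longrightarrow> xs i \<in> closure E \<and> measure lebesgue (E \<inter> {..xs i}) = real (Suc i) * h"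
    by metis
  have gaps: "\<bar>real i - real j\<bar> * h \<le> \<bar>xs i - xs j\<bar>" if "i \<le> k" "j \<le> k" for i j
  proof -
    have "\<bar>real i - real j\<bar> * h = dist (measure lebesgue (E \<inter> {..xs i})) (measure lebesgue (E \<inter> {..xs j}))"
    proof -
      have "real (Suc i) * h - real (Suc j) * h = (real i - real j) * h" by (simp add: algebra_simps)
      moreover have "0 \<le> h" using m by (simp add: h_def)
      ultimately show ?thesis using xs[OF that(1)] xs[OF that(2)] by (simp add: dist_real_def abs_mult)
    qed
    also have "\<dots> \<le> 1 * dist (xs i) (xs j)"
      using lipschitz_on_measure_Int_atMost[OF E(1)] by (rule lipschitz_onD) simp_all
    finally show ?thesis by (simp add: dist_real_def)
  qed
  have "inj_on xs {..k}"
  proof (rule inj_onI)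
    fix i j assume "i \<in> {..k}" "j \<in> {..k}" "xs i = xs j"
    then have "\<bar>real i - real j\<bar> * h \<le> 0" using gaps by fastforce
    moreover have "0 < h" using m by (simp add: h_def)
    ultimately show "i = j" by (simp add: mult_le_0_iff)
  qed
  then show ?thesis using that xs gaps unfolding h_def by blast
qed

lemma exists_far_window:
  fixes a b d x :: real
  assumes ab: "-1 \<le> a" "b \<le> 1" and d: "0 < d" "d \<le> 1/8" "b - a \<le> d" and x: "x \<in> {a..b}"
  obtains ctr \<sigma> where "\<bar>\<sigma>\<bar> = 1" "{ctr - 1/4..ctr + 1/4} \<subseteq> {-1..1}"
    and "\<And>y z. y \<in> {ctr - 1/4..ctr + 1/4} \<Longrightarrow> z \<in> {a..b} \<Longrightarrow> d \<le> \<bar>y - z\<bar>"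
    and "1 \<le> 4 * \<sigma> * (x - ctr)" "4 * \<sigma> * (x - ctr) \<le> 1 + 4 * (d + (b - a))"
proof (cases "b + d + 1/2 \<le> 1")
  case True
  show ?thesis
  proof (rule that[of "-1" "b + d + 1/4"])
    show "{b + d + 1/4 - 1/4..b + d + 1/4 + 1/4} \<subseteq> {-1..1}" using True ab d x by auto
    show "d \<le> \<bar>y - z\<bar>" if "y \<in> {b + d + 1/4 - 1/4..b + d + 1/4 + 1/4}" "z \<in> {a..b}" for y z
      using that by auto
  qed (use x d in auto)
next
  case False
  show ?thesis
  proof (rule that[of 1 "a - d - 1/4"])
    show "{a - d - 1/4 - 1/4..a - d - 1/4 + 1/4} \<subseteq> {-1..1}" using False ab d x by auto
    show "d \<le> \<bar>y - z\<bar>" if "y \<in> {a - d - 1/4 - 1/4..a - d - 1/4 + 1/4}" "z \<in> {a..b}" for y z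
      using that by auto
  qed (use x d in auto)
qed

lemma abs_poly_le_closure:
  fixes P :: "real poly"
  assumes "\<And>y. y \<in> E \<Longrightarrow> \<bar>poly P y\<bar> \<le> M" and "y \<in> closure E"
  shows "\<bar>poly P y\<bar> \<le> M"
proof -
  have "closure E \<subseteq> {y. \<bar>poly P y\<bar> \<le> M}"
    using assms(1) by (intro closure_minimal) (auto intro!: closed_Collect_le continuous_intros)
  then show ?thesis using assms(2) by blast
qed

lemma sum_near_group_le:
  fixes P :: "real poly" and xs :: "'a \<Rightarrow> real" and ys :: "'b \<Rightarrow> real"
  assumes xs: "\<And>i. i \<in> B \<Longrightarrow> xs i \<in> {a..b}" and x: "x \<in> {a..b}"
    and far: "\<And>i j. i \<in> B \<Longrightarrow> j \<in> C \<Longrightarrow> d \<le> \<bar>ys j - xs i\<bar>" and d: "0 < d"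
    and PM: "\<And>i. i \<in> B \<Longrightarrow> \<bar>poly P (xs i)\<bar> \<le> M"
  shows "(\<Sum>i\<in>B. \<bar>poly P (xs i)\<bar> * \<bar>lagrange_basis xs B i x\<bar> * (\<Prod>j\<in>C. \<bar>x - ys j\<bar> / \<bar>xs i - ys j\<bar>))
    \<le> M * (\<Sum>i\<in>B. \<bar>lagrange_basis xs B i x\<bar>) * (1 + (b - a) / d) ^ card C"
proof -
  have "(\<Prod>j\<in>C. \<bar>x - ys j\<bar> / \<bar>xs i - ys j\<bar>) \<le> (\<Prod>j\<in>C. 1 + (b - a) / d)" if i: "i \<in> B" for i
  proof (rule prod_mono)
    fix j assume j: "j \<in> C"
    have "\<bar>x - ys j\<bar> \<le> \<bar>xs i - ys j\<bar> + (b - a)" using x xs[OF i] by auto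
    then have "\<bar>x - ys j\<bar> / \<bar>xs i - ys j\<bar> \<le> 1 + (b - a) / \<bar>xs i - ys j\<bar>"
      using far[OF i j] d by (simp add: field_simps)
    also have "\<dots> \<le> 1 + (b - a) / d"
      using far[OF i j] d x by (auto simp: abs_minus_commute intro!: divide_left_mono)
    finally show "0 \<le> \<bar>x - ys j\<bar> / \<bar>xs i - ys j\<bar> \<and> \<bar>x - ys j\<bar> / \<bar>xs i - ys j\<bar> \<le> 1 + (b - a) / d"
      by simp
  qed
  then have "(\<Sum>i\<in>B. \<bar>poly P (xs i)\<bar> * \<bar>lagrange_basis xs B i x\<bar> * (\<Prod>j\<in>C. \<bar>x - ys j\<bar> / \<bar>xs i - ys j\<bar>))
      \<le> (\<Sum>i\<in>B. M * \<bar>lagrange_basis xs B i x\<bar> * (1 + (b - a) / d) ^ card C)"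
    using PM order_trans[OF abs_ge_zero PM] by (intro sum_mono mult_mono) (auto intro!: prod_nonneg)
  also have "\<dots> = M * (\<Sum>i\<in>B. \<bar>lagrange_basis xs B i x\<bar>) * (1 + (b - a) / d) ^ card C"
    by (simp add: sum_distrib_left sum_distrib_right mult.assoc)
  finally show ?thesis .
qed

lemma sum_far_group_le:
  fixes P :: "real poly" and xs :: "'a \<Rightarrow> real" and ys :: "'b \<Rightarrow> real"
  assumes xs: "\<And>i. i \<in> B \<Longrightarrow> xs i \<in> {a..b}" and x: "x \<in> {a..b}"
    and far: "\<And>i j. i \<in> B \<Longrightarrow> j \<in> C \<Longrightarrow> d \<le> \<bar>ys j - xs i\<bar>" and d: "0 < d"
    and P1: "\<And>j. j \<in> C \<Longrightarrow> \<bar>poly P (ys j)\<bar> \<le> 1"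
  shows "(\<Sum>j\<in>C. \<bar>poly P (ys j)\<bar> * \<bar>lagrange_basis ys C j x\<bar> * (\<Prod>i\<in>B. \<bar>x - xs i\<bar> / \<bar>ys j - xs i\<bar>))
    \<le> ((b - a) / d) ^ card B * (\<Sum>j\<in>C. \<bar>lagrange_basis ys C j x\<bar>)"
proof -
  have "(\<Prod>i\<in>B. \<bar>x - xs i\<bar> / \<bar>ys j - xs i\<bar>) \<le> (\<Prod>i\<in>B. (b - a) / d)" if j: "j \<in> C" for j
  proof (rule prod_mono)
    fix i assume i: "i \<in> B"
    show "0 \<le> \<bar>x - xs i\<bar> / \<bar>ys j - xs i\<bar> \<and> \<bar>x - xs i\<bar> / \<bar>ys j - xs i\<bar> \<le> (b - a) / d"
      using x xs[OF i] far[OF i j] d by (auto intro!: frac_le)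
  qed
  then have "(\<Sum>j\<in>C. \<bar>poly P (ys j)\<bar> * \<bar>lagrange_basis ys C j x\<bar> * (\<Prod>i\<in>B. \<bar>x - xs i\<bar> / \<bar>ys j - xs i\<bar>))
      \<le> (\<Sum>j\<in>C. 1 * \<bar>lagrange_basis ys C j x\<bar> * ((b - a) / d) ^ card B)"
    using P1 by (intro sum_mono mult_mono) (auto intro!: prod_nonneg)
  also have "\<dots> = ((b - a) / d) ^ card B * (\<Sum>j\<in>C. \<bar>lagrange_basis ys C j x\<bar>)"
    by (simp add: sum_distrib_left mult.commute)
  finally show ?thesis .
qed

lemma one_plus_power_le_exp:
  fixes t :: real
  assumes "0 \<le> t" "j \<le> n"
  shows "(1 + t) ^ j \<le> exp (real n * t)"
proof -
  have "(1 + t) ^ j \<le> exp t ^ j" using assms by (intro power_mono) (auto simp: add.commute)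
  also have "\<dots> = exp (real j * t)" by (simp flip: exp_of_nat_mult)
  also have "\<dots> \<le> exp (real n * t)" using assms by (intro exp_mono mult_right_mono) auto
  finally show ?thesis .
qed

lemma abs_poly_le_spaced_and_far_nodes:
  fixes P :: "real poly" and xs :: "nat \<Rightarrow> real"
  assumes deg: "degree P \<le> n" and kn: "k \<le> n"
    and xs: "\<And>i. i \<le> k \<Longrightarrow> xs i \<in> {a..b}" "inj_on xs {..k}"
    and gaps: "\<And>i j. i \<le> k \<Longrightarrow> j \<le> k \<Longrightarrow> \<bar>real i - real j\<bar> * (m / real (Suc k)) \<le> \<bar>xs i - xs j\<bar>"
    and m: "0 < m" and PM: "\<And>i. i \<le> k \<Longrightarrow> \<bar>poly P (xs i)\<bar> \<le> M"
    and \<sigma>: "\<bar>\<sigma>\<bar> = 1" and window: "\<And>y. y \<in> {ctr - 1/4..ctr + 1/4} \<Longrightarrow> \<bar>poly P y\<bar> \<le> 1"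
    and far: "\<And>y z. y \<in> {ctr - 1/4..ctr + 1/4} \<Longrightarrow> z \<in> {a..b} \<Longrightarrow> d \<le> \<bar>y - z\<bar>" and d: "0 < d"
    and x: "x \<in> {a..b}" and X: "1 \<le> 4 * \<sigma> * (x - ctr)" "4 * \<sigma> * (x - ctr) \<le> 1 + \<tau>" "\<tau> \<le> 1"
  shows "\<bar>poly P x\<bar> \<le> M * (2 * exp 1 * (b - a) / m) ^ k * exp (real n * ((b - a) / d))
    + (if k < n then ((b - a) / d) ^ (k + 1) * exp (real n * (\<tau> + sqrt (3 * \<tau>))) else 0)"
proof -
  define N where "N = n - k - 1"
  define ys where "ys j = ctr + \<sigma> / 4 * cheb_node N j" for j
  have ys: "ys j \<in> {ctr - 1/4..ctr + 1/4}" for j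
  proof -
    have "\<bar>\<sigma> * cheb_node N j\<bar> \<le> 1" using abs_cheb_node_le[of N j] \<sigma> by (simp add: abs_mult)
    then show ?thesis by (auto simp: ys_def abs_le_iff)
  qed
  have ys_xs: "d \<le> \<bar>ys j - xs i\<bar>" if "i \<le> k" for i j
    using far[OF ys xs(1)[OF that]] .
  have inj_ys: "inj_on ys {..<n - k}"
    using inj_on_cheb_node[of N] \<sigma> by (auto simp: inj_on_def ys_def N_def)
  have "\<bar>poly P x\<bar> \<le>
      (\<Sum>i\<le>k. \<bar>poly P (xs i)\<bar> * \<bar>lagrange_basis xs {..k} i x\<bar> * (\<Prod>j<n - k. \<bar>x - ys j\<bar> / \<bar>xs i - ys j\<bar>))
    + (\<Sum>j<n - k. \<bar>poly P (ys j)\<bar> * \<bar>lagrange_basis ys {..<n - k} j x\<bar> * (\<Prod>i\<le>k. \<bar>x - xs i\<bar> / \<bar>ys j - xs i\<bar>))"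
  proof (rule abs_poly_le_two_node_groups[OF _ _ xs(2) inj_ys])
    show "xs i \<noteq> ys j" if "i \<in> {..k}" for i j
      using ys_xs[of i j] that d by auto
  qed (use deg kn in simp_all)
  also have "\<dots> \<le> M * (\<Sum>i\<le>k. \<bar>lagrange_basis xs {..k} i x\<bar>) * (1 + (b - a) / d) ^ card {..<n - k}
      + ((b - a) / d) ^ card {..k} * (\<Sum>j<n - k. \<bar>lagrange_basis ys {..<n - k} j x\<bar>)"
    by (intro add_mono sum_near_group_le sum_far_group_le) (use xs x ys_xs d PM window ys in auto)
  also have "\<dots> = M * (\<Sum>i\<le>k. \<bar>lagrange_basis xs {..k} i x\<bar>) * (1 + (b - a) / d) ^ (n - k)
      + ((b - a) / d) ^ (k + 1) * (\<Sum>j<n - k. \<bar>lagrange_basis ys {..<n - k} j x\<bar>)"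
    by simp
  also have "\<dots> \<le> M * (2 * exp 1 * (b - a) / m) ^ k * exp (real n * ((b - a) / d))
      + (if k < n then ((b - a) / d) ^ (k + 1) * exp (real n * (\<tau> + sqrt (3 * \<tau>))) else 0)"
  proof (intro add_mono mult_mono)
    show "(\<Sum>i\<le>k. \<bar>lagrange_basis xs {..k} i x\<bar>) \<le> (2 * exp 1 * (b - a) / m) ^ k"
      by (rule sum_abs_lagrange_basis_spaced_nodes) (use xs x m gaps in auto)
    show "(1 + (b - a) / d) ^ (n - k) \<le> exp (real n * ((b - a) / d))"
      using x d by (intro one_plus_power_le_exp) auto
    show "((b - a) / d) ^ (k + 1) * (\<Sum>j<n - k. \<bar>lagrange_basis ys {..<n - k} j x\<bar>)
        \<le> (if k < n then ((b - a) / d) ^ (k + 1) * exp (real n * (\<tau> + sqrt (3 * \<tau>))) else 0)"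
    proof (cases "k < n")
      case True
      then have "{..<n - k} = {..N}" by (auto simp: N_def)
      moreover have "(\<Sum>j\<le>N. \<bar>lagrange_basis ys {..N} j x\<bar>) \<le> exp (real N * (\<tau> + sqrt (3 * \<tau>)))"
        unfolding ys_def by (rule sum_abs_lagrange_basis_far_nodes[OF \<sigma> X])
      moreover have "exp (real N * (\<tau> + sqrt (3 * \<tau>))) \<le> exp (real n * (\<tau> + sqrt (3 * \<tau>)))"
        using X by (intro exp_mono mult_right_mono) (auto simp: N_def)
      moreover have "0 \<le> ((b - a) / d) ^ (k + 1)" using x d by simp
      ultimately show ?thesis using True by (simp only: if_True) (meson order_trans mult_left_mono)
    qed simp
  qed (use x d m order_trans[OF abs_ge_zero PM[of 0]] in auto)
  finally show ?thesis .
qed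

lemma abs_poly_le_near_small_set:
  fixes P :: "real poly" and E :: "real set"
  assumes deg: "degree P \<le> n" and kn: "k \<le> n"
    and E: "E \<in> lmeasurable" "E \<subseteq> {a..b}" "0 < measure lebesgue E"
    and PE: "\<And>y. y \<in> E \<Longrightarrow> \<bar>poly P y\<bar> \<le> M"
    and P1: "\<And>y. y \<in> {-1..1} \<Longrightarrow> \<bar>poly P y\<bar> \<le> 1"
    and ab: "-1 \<le> a" "b \<le> 1" and d: "0 < d" "d \<le> 1/8" "b - a \<le> d" and x: "x \<in> {a..b}"
  shows "\<bar>poly P x\<bar> \<le> M * (2 * exp 1 * (b - a) / measure lebesgue E) ^ k * exp (real n * ((b - a) / d))
    + (if k < n then ((b - a) / d) ^ (k + 1)
         * exp (real n * (4 * (d + (b - a)) + sqrt (3 * (4 * (d + (b - a)))))) else 0)"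
proof -
  define \<tau> where "\<tau> = 4 * (d + (b - a))"
  obtain xs where xs_E: "\<And>i. i \<le> k \<Longrightarrow> xs i \<in> closure E" and inj_xs: "inj_on xs {..k}"
    and gaps: "\<And>i j. i \<le> k \<Longrightarrow> j \<le> k \<Longrightarrow> \<bar>real i - real j\<bar> * (measure lebesgue E / real (Suc k)) \<le> \<bar>xs i - xs j\<bar>"
    using exists_spaced_nodes[OF E] by metis
  have xs: "xs i \<in> {a..b}" if "i \<le> k" for i
    using closure_minimal[OF E(2)] xs_E[OF that] by auto
  have PM: "\<bar>poly P (xs i)\<bar> \<le> M" if "i \<le> k" for i
    using abs_poly_le_closure[OF PE xs_E[OF that]] .
  obtain ctr \<sigma> where \<sigma>: "\<bar>\<sigma>\<bar> = 1" and window: "{ctr - 1/4..ctr + 1/4} \<subseteq> {-1..1}"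
    and far: "\<And>y z. y \<in> {ctr - 1/4..ctr + 1/4} \<Longrightarrow> z \<in> {a..b} \<Longrightarrow> d \<le> \<bar>y - z\<bar>"
    and X: "1 \<le> 4 * \<sigma> * (x - ctr)" "4 * \<sigma> * (x - ctr) \<le> 1 + \<tau>"
    using exists_far_window[OF ab d x] unfolding \<tau>_def by metis
  have "\<tau> \<le> 1" using d by (simp add: \<tau>_def)
  have P_window: "\<bar>poly P y\<bar> \<le> 1" if "y \<in> {ctr - 1/4..ctr + 1/4}" for y
    using P1 window that by blast
  have "\<bar>poly P x\<bar> \<le> M * (2 * exp 1 * (b - a) / measure lebesgue E) ^ k * exp (real n * ((b - a) / d))
      + (if k < n then ((b - a) / d) ^ (k + 1) * exp (real n * (\<tau> + sqrt (3 * \<tau>))) else 0)"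
    by (rule abs_poly_le_spaced_and_far_nodes[OF deg kn xs inj_xs gaps E(3) PM \<sigma> P_window far d(1) x X \<open>\<tau> \<le> 1\<close>])
  then show ?thesis by (simp only: \<tau>_def)
qed

section \<open>Choosing the number of nodes in the small set\<close>

lemma far_nodes_term_le:
  fixes c \<epsilon> \<Lambda> \<delta> u g :: real and n k :: nat
  assumes k: "c * (\<delta> * real n) + real n * g + ln 2 \<le> (real k + 1) * ((c + \<epsilon> / 2) * \<Lambda>)"
    and u: "0 < u" "u \<le> exp (- ((c + \<epsilon> / 2) * \<Lambda>))"
  shows "u ^ (k + 1) * exp (real n * g) \<le> exp (- c * \<delta> * real n) / 2"
proof -
  have "u ^ (k + 1) \<le> exp (- ((c + \<epsilon> / 2) * \<Lambda>)) ^ (k + 1)"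
    using u by (intro power_mono) auto
  also have "\<dots> = exp (- (real (k + 1) * ((c + \<epsilon> / 2) * \<Lambda>)))"
    by (subst exp_of_nat_mult[symmetric]) (simp add: algebra_simps)
  also have "\<dots> \<le> exp (- (c * (\<delta> * real n) + real n * g + ln 2))"
    using k by (simp add: algebra_simps)
  finally have "u ^ (k + 1) * exp (real n * g) \<le> exp (- (c * (\<delta> * real n) + real n * g + ln 2)) * exp (real n * g)"
    by (simp add: mult_right_mono)
  also have "\<dots> = exp (- (c * (\<delta> * real n)) - ln 2)"
    by (simp add: exp_add[symmetric])
  also have "\<dots> = exp (- c * \<delta> * real n) / 2"
    by (simp add: exp_diff)
  finally show ?thesis .
qed

text \<open>
  The \<open>n + 1\<close> nodes are split into \<open>k + 1\<close> nodes near the small set and \<open>n - k\<close> far ones.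
  Below the threshold \<open>\<delta> n \<le> K\<close> the split \<open>k = 0\<close> is used; \<open>\<eta>\<close> bounds the small quantities
  \<open>u = |I| / d\<close> and \<open>g\<close> of the interpolation estimate.
\<close>
locale degree_split_constants =
  fixes \<delta>0 c0 \<epsilon> K \<eta> :: real
  assumes \<delta>0_pos: "0 < \<delta>0" and c0_pos: "0 < c0" and \<epsilon>_pos: "0 < \<epsilon>"
    and \<eta>_nonneg: "0 \<le> \<eta>"
    and K_large: "2 / c0 + 1 \<le> K * \<epsilon> / 4"
    and \<eta>_small_1: "K / \<delta>0 * \<eta> \<le> 1 / 2"
    and \<eta>_small_2: "2 * (K / \<delta>0 + 1) * \<eta> \<le> exp (- K) * \<epsilon> * \<delta>0"
    and \<eta>_small_3: "\<eta> * (2 / c0 + 1) / \<delta>0 \<le> \<epsilon> / 4"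
begin

lemma bounded_exponent_case:
  fixes \<delta> c u g :: real and n :: nat
  assumes n: "1 \<le> n" and A: "\<delta> * real n \<le> K" and \<delta>: "\<delta>0 \<le> \<delta>"
    and c: "0 \<le> c" and \<epsilon>: "\<epsilon> \<le> 1 - c"
    and u: "0 \<le> u" "u \<le> \<eta>" and g: "0 \<le> g" "g \<le> \<eta>"
  shows "exp (- \<delta> * real n) * exp (real n * u) + u * exp (real n * g) \<le> exp (- c * \<delta> * real n)"
proof -
  define A where "A = \<delta> * real n"
  have "\<delta> * 1 \<le> \<delta> * real n" using n \<delta> \<delta>0_pos by (intro mult_left_mono) auto
  then have A0: "\<delta>0 \<le> A" using \<delta> by (simp add: A_def)
  have "\<delta>0 * real n \<le> K" using A \<delta> mult_right_mono[OF \<delta>, of "real n"] by simp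
  then have nK: "real n \<le> K / \<delta>0" using \<delta>0_pos by (simp add: field_simps)
  define B where "B = K / \<delta>0 * \<eta>"
  have "0 \<le> K / \<delta>0" using nK of_nat_0_le_iff[of n] by linarith
  then have B: "0 \<le> B" "B \<le> 1 / 2"
    unfolding B_def using \<eta>_nonneg \<eta>_small_1 by (simp_all only: mult_nonneg_nonneg)
  have "real n * u \<le> B" "real n * g \<le> B"
    unfolding B_def using nK u g by (intro mult_mono; linarith)+
  then have "exp (real n * u) \<le> 1 + 2 * B" "exp (real n * g) \<le> 2"
    using real_exp_bound_lemma[of "real n * u"] real_exp_bound_lemma[of "real n * g"] B u g by simp_all
  then have "exp (- \<delta> * real n) * exp (real n * u) + u * exp (real n * g)
      \<le> exp (- A) * (1 + 2 * B) + \<eta> * 2"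
    unfolding A_def using u g by (intro add_mono mult_mono) auto
  also have "\<dots> \<le> exp (- A) + 2 * (K / \<delta>0 + 1) * \<eta>"
  proof -
    have "exp (- A) \<le> 1" using A0 \<delta>0_pos by simp
    then have "exp (- A) * (2 * B) \<le> 2 * B" using B by (simp add: mult_left_le_one_le)
    then show ?thesis by (simp add: B_def algebra_simps)
  qed
  also have "\<dots> \<le> exp (- A) + exp (- A) * ((1 - c) * A)"
  proof -
    have "exp (- K) \<le> exp (- A)" using A by (simp add: A_def)
    moreover have "\<epsilon> * \<delta>0 \<le> (1 - c) * A" using \<epsilon> A0 \<epsilon>_pos \<delta>0_pos by (intro mult_mono) auto
    ultimately have "exp (- K) * \<epsilon> * \<delta>0 \<le> exp (- A) * ((1 - c) * A)"
      using \<epsilon>_pos \<delta>0_pos by (simp add: mult.assoc mult_mono)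
    then show ?thesis using \<eta>_small_2 by simp
  qed
  also have "\<dots> = exp (- A) * (1 + (1 - c) * A)" by (simp add: algebra_simps)
  also have "\<dots> \<le> exp (- A) * exp ((1 - c) * A)" by (intro mult_left_mono) auto
  also have "\<dots> = exp (- c * \<delta> * real n)"
    by (simp add: A_def exp_add[symmetric] algebra_simps)
  finally show ?thesis .
qed

lemma log_power_le:
  fixes c \<Lambda> W A r :: real and k :: nat
  assumes k: "real k * ((c + \<epsilon> / 2) * \<Lambda>) \<le> c * A + r" and A: "0 \<le> A" and r: "0 \<le> r"
    and c: "c0 \<le> c" "c < 1" and \<epsilon>: "\<epsilon> \<le> 1 - c" and \<Lambda>: "10 \<le> \<Lambda> * \<epsilon>" "2 \<le> \<Lambda>"
    and W: "1 \<le> W" "ln W \<le> 2 + (1 - c - \<epsilon>) * \<Lambda>"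
  shows "real k * ln W \<le> A * (1 - c - \<epsilon> / 2) + r * (2 / c0)"
proof -
  define \<beta> where "\<beta> = c + \<epsilon> / 2"
  define Q where "Q = 2 + (1 - c - \<epsilon>) * \<Lambda>"
  have c_pos: "0 < c" using c c0_pos by simp
  have \<beta>\<Lambda>: "0 < \<beta> * \<Lambda>" using c_pos \<epsilon>_pos \<Lambda> by (simp add: \<beta>_def)
  \<comment> \<open>Here \<open>\<epsilon> \<Lambda> \<ge> 10\<close> is used: it pays for the additive constant \<open>2\<close> in \<open>Q\<close>.\<close>
  have cQ: "c * Q \<le> (1 - c - \<epsilon> / 2) * (\<beta> * \<Lambda>)"
  proof -
    have "(1 - c - \<epsilon> / 2) * (\<beta> * \<Lambda>) - c * Q = \<Lambda> * (\<epsilon> / 2) * (1 - \<epsilon> / 2) - 2 * c"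
      by (simp add: Q_def \<beta>_def algebra_simps power2_eq_square)
    moreover have "5 * (1 / 2) \<le> \<Lambda> * (\<epsilon> / 2) * (1 - \<epsilon> / 2)"
      using \<Lambda> \<epsilon> c_pos \<epsilon>_pos by (intro mult_mono) auto
    ultimately show ?thesis using c by linarith
  qed
  have Q: "Q \<le> 2 / c0 * (\<beta> * \<Lambda>)"
  proof -
    have "(1 - c - \<epsilon>) * \<Lambda> \<le> 1 * \<Lambda>" using \<epsilon>_pos c_pos \<Lambda> by (intro mult_right_mono) auto
    then have "Q \<le> 2 * \<Lambda>" unfolding Q_def using \<Lambda> by linarith
    also have "\<dots> = 2 / c0 * (c0 * \<Lambda>)" using c0_pos by simp
    also have "\<dots> \<le> 2 / c0 * (\<beta> * \<Lambda>)"
      using c c0_pos \<epsilon>_pos \<Lambda> by (intro mult_left_mono mult_right_mono) (auto simp: \<beta>_def)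
    finally show ?thesis .
  qed
  have kX: "real k \<le> (c * A + r) / (\<beta> * \<Lambda>)"
    using k \<beta>\<Lambda> by (simp add: le_divide_eq \<beta>_def)
  have Q0: "0 \<le> Q" using W ln_ge_zero[OF W(1)] unfolding Q_def by linarith
  have "real k * ln W \<le> real k * Q"
    using W by (intro mult_left_mono) (auto simp: Q_def)
  also have "\<dots> \<le> (c * A + r) / (\<beta> * \<Lambda>) * Q"
    using kX Q0 by (rule mult_right_mono)
  also have "\<dots> = A * (c * Q / (\<beta> * \<Lambda>)) + r * (Q / (\<beta> * \<Lambda>))"
    by (simp add: algebra_simps add_divide_distrib)
  also have "\<dots> \<le> A * (1 - c - \<epsilon> / 2) + r * (2 / c0)"
    using cQ Q \<beta>\<Lambda> A r by (intro add_mono mult_left_mono) (auto simp: divide_le_eq)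
  finally show ?thesis .
qed

lemma near_nodes_term_le:
  fixes \<delta> c \<Lambda> W u g :: real and n k :: nat
  assumes k: "real k * ((c + \<epsilon> / 2) * \<Lambda>) \<le> c * (\<delta> * real n) + (real n * g + ln 2)"
    and A: "K \<le> \<delta> * real n" and \<delta>: "\<delta>0 \<le> \<delta>"
    and c: "c0 \<le> c" "c < 1" and \<epsilon>: "\<epsilon> \<le> 1 - c"
    and \<Lambda>: "10 \<le> \<Lambda> * \<epsilon>" "2 \<le> \<Lambda>"
    and W: "1 \<le> W" "ln W \<le> 2 + (1 - c - \<epsilon>) * \<Lambda>"
    and u: "0 \<le> u" "u \<le> \<eta>" and g: "0 \<le> g" "g \<le> \<eta>"
  shows "exp (- \<delta> * real n) * W ^ k * exp (real n * u) \<le> exp (- c * \<delta> * real n) / 2"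
proof -
  define A where "A = \<delta> * real n"
  have A0: "0 \<le> A" using \<delta> \<delta>0_pos by (simp add: A_def)
  have nA: "real n \<le> A / \<delta>0"
    using mult_right_mono[OF \<delta>, of "real n"] \<delta>0_pos by (simp add: A_def field_simps)
  have kW: "real k * ln W \<le> A * (1 - c - \<epsilon> / 2) + (real n * g + ln 2) * (2 / c0)"
    by (rule log_power_le[OF _ _ _ c \<epsilon> \<Lambda> W]) (use k A0 g in \<open>auto simp: A_def\<close>)
  \<comment> \<open>Since \<open>n \<le> A / \<delta>0\<close> and \<open>K \<le> A\<close>, all remaining terms are absorbed by \<open>A \<epsilon> / 2\<close>.\<close>
  have "(real n * g + ln 2) * (2 / c0) + real n * u + ln 2
      \<le> (A / \<delta>0 * \<eta> + 1) * (2 / c0) + A / \<delta>0 * \<eta> + 1"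
    using nA g u ln_2_less_1 c0_pos by (intro add_mono mult_right_mono mult_mono) auto
  also have "\<dots> = A * (\<eta> * (2 / c0 + 1) / \<delta>0) + (2 / c0 + 1)"
    using c0_pos \<delta>0_pos by (simp add: field_simps)
  also have "\<dots> \<le> A * (\<epsilon> / 4) + K * \<epsilon> / 4"
    using mult_left_mono[OF \<eta>_small_3 A0] K_large by linarith
  also have "\<dots> \<le> A * (\<epsilon> / 2)"
    using mult_right_mono[OF A, of \<epsilon>] \<epsilon>_pos unfolding A_def by linarith
  moreover have "A * (1 - c - \<epsilon> / 2) = A - c * A - A * (\<epsilon> / 2)" by (simp add: algebra_simps)
  ultimately have "- A + real k * ln W + real n * u \<le> - (c * A) - ln 2"
    using kW by linarith
  then have "exp (- A + real k * ln W + real n * u) \<le> exp (- (c * A) - ln 2)"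
    by (simp only: exp_le_cancel_iff)
  also have "\<dots> = exp (- c * A) / 2" by (simp add: exp_diff)
  finally have "exp (- A + real k * ln W + real n * u) \<le> exp (- c * A) / 2" .
  moreover have "W ^ k = exp (real k * ln W)" using W by (simp add: exp_of_nat_mult)
  ultimately show ?thesis by (simp add: A_def exp_add[symmetric] mult.assoc)
qed

lemma exists_degree_split:
  fixes \<delta> c \<Lambda> W u g :: real and n :: nat
  assumes \<delta>: "\<delta>0 \<le> \<delta>" and c: "c0 \<le> c" "c < 1" and \<epsilon>: "\<epsilon> \<le> 1 - c"
    and \<Lambda>: "10 \<le> \<Lambda> * \<epsilon>" "2 \<le> \<Lambda>"
    and W: "1 \<le> W" "ln W \<le> 2 + (1 - c - \<epsilon>) * \<Lambda>"
    and u: "0 < u" "u \<le> exp (- ((c + \<epsilon> / 2) * \<Lambda>))" "u \<le> \<eta>" and g: "0 \<le> g" "g \<le> \<eta>"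
  shows "\<exists>k\<le>n. exp (- \<delta> * real n) * W ^ k * exp (real n * u)
      + (if k < n then u ^ (k + 1) * exp (real n * g) else 0) \<le> exp (- c * \<delta> * real n)"
proof -
  have c_pos: "0 < c" using c c0_pos by simp
  consider "n = 0" | "1 \<le> n" "\<delta> * real n \<le> K" | "K \<le> \<delta> * real n" by linarith
  then show ?thesis
  proof cases
    case 1
    then show ?thesis by simp
  next
    case 2
    then show ?thesis
      using bounded_exponent_case[OF 2 \<delta> _ \<epsilon> _ u(3) g] c_pos u by (intro exI[of _ 0]) simp
  next
    case 3
    define X where "X = (c * (\<delta> * real n) + real n * g + ln 2) / ((c + \<epsilon> / 2) * \<Lambda>)"
    have pos: "0 < (c + \<epsilon> / 2) * \<Lambda>" using c_pos \<epsilon>_pos \<Lambda> by simp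
    have "0 \<le> c * (\<delta> * real n) + real n * g + ln 2" using c_pos \<delta> \<delta>0_pos g by simp
    then have X0: "0 \<le> X" using pos by (simp add: X_def)
    \<comment> \<open>Take as many spaced nodes as the second term can pay for, but at most \<open>n\<close>.\<close>
    define k where "k = min n (nat \<lfloor>X\<rfloor>)"
    have "real k \<le> X" using X0 by (simp add: k_def of_nat_min) linarith
    then have "real k * ((c + \<epsilon> / 2) * \<Lambda>) \<le> c * (\<delta> * real n) + real n * g + ln 2"
      using pos by (simp add: X_def le_divide_eq)
    then have first: "exp (- \<delta> * real n) * W ^ k * exp (real n * u) \<le> exp (- c * \<delta> * real n) / 2"
      using near_nodes_term_le 3 \<delta> c \<epsilon> \<Lambda> W u g by (simp add: add.assoc)
    have second: "u ^ (k + 1) * exp (real n * g) \<le> exp (- c * \<delta> * real n) / 2" if "k < n"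
    proof (rule far_nodes_term_le)
      have "X \<le> real k + 1" using that X0 by (simp add: k_def)
      then show "c * (\<delta> * real n) + real n * g + ln 2 \<le> (real k + 1) * ((c + \<epsilon> / 2) * \<Lambda>)"
        using pos by (simp add: X_def divide_le_eq)
    qed (use u in auto)
    have "exp (- \<delta> * real n) * W ^ k * exp (real n * u) + (if k < n then u ^ (k + 1) * exp (real n * g) else 0)
        \<le> exp (- c * \<delta> * real n) / 2 + exp (- c * \<delta> * real n) / 2"
      using first second by (intro add_mono) auto
    moreover have "k \<le> n" by (simp add: k_def)
    ultimately show ?thesis by (intro exI[of _ k]) simp
  qed
qed

end

lemma exists_degree_split_constants:
  fixes \<delta>0 c0 \<epsilon> :: real
  assumes "0 < \<delta>0" "0 < c0" "0 < \<epsilon>"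
  obtains K \<eta> where "degree_split_constants \<delta>0 c0 \<epsilon> K \<eta>" "0 < \<eta>" "\<eta> \<le> 1"
proof -
  define K where "K = 4 * (2 / c0 + 1) / \<epsilon>"
  define N where "N = K / \<delta>0 + 1"
  define \<eta> where "\<eta> = Min {1, 1 / (2 * N), exp (- K) * \<epsilon> * \<delta>0 / (2 * N), \<epsilon> * \<delta>0 / (4 * (2 / c0 + 1))}"
  have K: "0 < K" using assms by (simp add: K_def add_pos_pos)
  then have N: "1 < N" using assms by (simp add: N_def)
  have \<eta>: "0 < \<eta>" "\<eta> \<le> 1" using assms N by (simp_all add: \<eta>_def add_pos_pos)
  have "degree_split_constants \<delta>0 c0 \<epsilon> K \<eta>"
  proof
    have "K / \<delta>0 = N - 1" by (simp add: N_def)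
    moreover have "(N - 1) * \<eta> \<le> N * (1 / (2 * N))"
      using \<eta> N by (intro mult_mono) (auto simp: \<eta>_def)
    ultimately show "K / \<delta>0 * \<eta> \<le> 1 / 2" using N by simp
    have "2 * N * \<eta> \<le> 2 * N * (exp (- K) * \<epsilon> * \<delta>0 / (2 * N))"
      using N by (intro mult_left_mono) (auto simp: \<eta>_def)
    then show "2 * (K / \<delta>0 + 1) * \<eta> \<le> exp (- K) * \<epsilon> * \<delta>0" using N by (simp add: N_def[symmetric])
    define B where "B = 2 / c0 + 1"
    have "0 < B" using assms by (simp add: B_def add_pos_pos)
    moreover have "\<eta> * B \<le> \<epsilon> * \<delta>0 / (4 * B) * B"
      using assms \<open>0 < B\<close> by (intro mult_right_mono) (auto simp: \<eta>_def B_def)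
    ultimately show "\<eta> * (2 / c0 + 1) / \<delta>0 \<le> \<epsilon> / 4"
      using assms by (simp add: B_def[symmetric] divide_le_eq)
  qed (use assms \<eta> in \<open>simp_all add: K_def\<close>)
  then show ?thesis using that \<eta> by blast
qed

lemma abs_poly_le_of_unif_norm_le:
  fixes P :: "real poly"
  assumes "S \<subseteq> {-1..1}" "unif_norm P S \<le> B" "x \<in> S"
  shows "\<bar>poly P x\<bar> \<le> B"
proof -
  have "compact ((\<lambda>x. \<bar>poly P x\<bar>) ` {-1..1::real})"
    by (rule compact_continuous_image) (auto intro!: continuous_intros)
  then have "bdd_above ((\<lambda>x. \<bar>poly P x\<bar>) ` S)"
    using assms(1) by (meson bdd_above_mono bounded_imp_bdd_above compact_imp_bounded image_mono)
  then have "\<bar>poly P x\<bar> \<le> unif_norm P S" unfolding unif_norm_def using assms(3) by (rule cSUP_upper2) simp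
  then show ?thesis using assms(2) by simp
qed

lemma unif_norm_le:
  fixes P :: "real poly"
  assumes "S \<noteq> {}" "\<And>x. x \<in> S \<Longrightarrow> \<bar>poly P x\<bar> \<le> B"
  shows "unif_norm P S \<le> B"
  unfolding unif_norm_def using assms by (rule cSUP_least)

lemma interval_subset_Icc_measure:
  fixes I :: "real set"
  assumes I: "is_interval I" "I \<noteq> {}" "I \<subseteq> {-1..1}"
  obtains a b where "I \<subseteq> {a..b}" "-1 \<le> a" "b \<le> 1" "b - a \<le> measure lebesgue I"
proof
  have bdd: "bdd_below I" "bdd_above I"
    using bdd_below_Icc[of "-1" 1] bdd_above_Icc[of "-1" 1] I(3) by (auto intro: bdd_below_mono bdd_above_mono)
  show sub: "I \<subseteq> {Inf I..Sup I}" using bdd by (auto intro: cInf_lower cSup_upper)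
  show "-1 \<le> Inf I" "Sup I \<le> 1" using I(2,3) by (intro cInf_greatest cSup_least; auto)+
  have "{Inf I<..<Sup I} \<subseteq> I"
  proof
    fix y assume y: "y \<in> {Inf I<..<Sup I}"
    obtain x1 x2 where "x1 \<in> I" "x1 < y" "x2 \<in> I" "y < x2"
      using cInf_lessD[OF I(2), of y] less_cSupD[OF I(2), of y] y by auto
    then show "y \<in> I" using I(1) unfolding is_interval_1 by (meson less_imp_le)
  qed
  moreover have "I \<in> lmeasurable"
    using I by (intro measurable_convex is_interval_convex) (auto intro: bounded_subset[OF bounded_closed_interval])
  ultimately have "measure lebesgue {Inf I<..<Sup I} \<le> measure lebesgue I"
    by (intro measure_mono_fmeasurable) auto
  moreover have "Inf I \<le> Sup I" using sub I(2) by auto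
  ultimately show "Sup I - Inf I \<le> measure lebesgue I" by simp
qed

lemma small_set_exponents:
  fixes m L c \<epsilon> \<eta> p :: real
  assumes m: "0 < m" "m < 1" and L: "m \<le> L" "L \<le> m powr p" and p: "c + \<epsilon> \<le> p"
    and c: "0 \<le> c" and \<epsilon>: "0 < \<epsilon>" and \<eta>: "m powr (\<epsilon> / 4) \<le> \<eta> / 13" "\<eta> \<le> 1"
  defines "d \<equiv> m powr (\<epsilon> / 2)"
  shows "d \<le> 1 / 8" "L \<le> d"
    and "1 \<le> 2 * exp 1 * L / m" "ln (2 * exp 1 * L / m) \<le> 2 + (1 - c - \<epsilon>) * (- ln m)"
    and "0 < L / d" "L / d \<le> exp (- ((c + \<epsilon> / 2) * (- ln m)))" "L / d \<le> \<eta>"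
    and "4 * (d + L) + sqrt (3 * (4 * (d + L))) \<le> \<eta>"
proof -
  define s where "s = m powr (\<epsilon> / 4)"
  have s: "0 < s" "s \<le> \<eta> / 13" using m \<eta> by (simp_all add: s_def)
  have "d \<le> s" using m \<epsilon> unfolding d_def s_def by (intro powr_mono') auto
  moreover have "sqrt d = s" using m powr_half_sqrt_powr[of m "\<epsilon> / 2"] by (simp add: d_def s_def)
  ultimately have d_s: "sqrt d = s" "d \<le> s" by simp_all
  show L_d: "L \<le> d" using L m p c \<epsilon> powr_mono'[of "\<epsilon> / 2" p m] by (simp add: d_def)
  show "d \<le> 1 / 8" using d_s s \<eta> by simp
  have d: "0 < d" using m by (simp add: d_def)
  have "m * 1 \<le> L * (2 * exp 1)"
    using L m exp_ge_add_one_self[of 1] by (intro mult_mono) auto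
  then show "1 \<le> 2 * exp 1 * L / m" using m by (simp add: field_simps)
  have "ln L \<le> p * ln m" using L m by (simp add: ln_powr[symmetric] del: ln_powr)
  moreover have "(1 - p) * (- ln m) \<le> (1 - c - \<epsilon>) * (- ln m)" using p m by (intro mult_right_mono) auto
  ultimately show "ln (2 * exp 1 * L / m) \<le> 2 + (1 - c - \<epsilon>) * (- ln m)"
    using L m ln_2_less_1 by (simp add: ln_mult ln_div algebra_simps)
  show "0 < L / d" using L m d by simp
  have u: "L / d \<le> m powr (p - \<epsilon> / 2)"
    using L d by (simp add: d_def powr_diff divide_right_mono)
  also have "m powr (p - \<epsilon> / 2) \<le> m powr (c + \<epsilon> / 2)" using m p by (intro powr_mono') auto
  finally show "L / d \<le> exp (- ((c + \<epsilon> / 2) * (- ln m)))" using m by (simp add: powr_def)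
  have "m powr (p - \<epsilon> / 2) \<le> m powr (\<epsilon> / 4)" using m p c \<epsilon> by (intro powr_mono') auto
  then show "L / d \<le> \<eta>" using u s unfolding s_def by linarith
  have "sqrt (3 * (4 * (d + L))) \<le> sqrt (24 * d)" using L_d by simp
  also have "\<dots> = sqrt 24 * s" using d_s by (simp add: real_sqrt_mult)
  also have "\<dots> \<le> 5 * s" using s real_sqrt_le_mono[of 24 25] by (intro mult_right_mono) simp_all
  finally have "sqrt (3 * (4 * (d + L))) \<le> 5 * s" .
  moreover have "4 * (d + L) \<le> 8 * s" using L_d d_s(2) by (smt (verit))
  ultimately show "4 * (d + L) + sqrt (3 * (4 * (d + L))) \<le> \<eta>" using s by linarith
qed


lemma tiny_measure_bounds:
  fixes m \<epsilon> \<eta> :: real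
  assumes m: "0 < m" "m < (\<eta> / 13) powr (4 / \<epsilon>)" "m < exp (- max (10 / \<epsilon>) 2)"
    and \<epsilon>: "0 < \<epsilon>" and \<eta>: "0 \<le> \<eta>"
  shows "m < 1" "10 \<le> - ln m * \<epsilon>" "2 \<le> - ln m" "m powr (\<epsilon> / 4) \<le> \<eta> / 13"
proof -
  have "ln m < ln (exp (- max (10 / \<epsilon>) 2))"
    using m by (subst ln_less_cancel_iff) simp_all
  then have "10 / \<epsilon> < - ln m" "2 < - ln m" by (simp_all add: max_def split: if_splits)
  then show "10 \<le> - ln m * \<epsilon>" "2 \<le> - ln m" using \<epsilon> by (simp_all add: field_simps)
  then have "ln m < 0" by linarith
  then show "m < 1" using m by simp
  have "m powr (\<epsilon> / 4) < ((\<eta> / 13) powr (4 / \<epsilon>)) powr (\<epsilon> / 4)"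
    using m \<epsilon> by (intro powr_less_mono2) simp_all
  also have "\<dots> = \<eta> / 13" using \<epsilon> \<eta> by (simp add: powr_powr)
  finally show "m powr (\<epsilon> / 4) \<le> \<eta> / 13" by simp
qed

lemma exponent_gap:
  fixes c \<epsilon> :: real
  assumes "0 < c" "c < 1" "\<epsilon> < (1 - c) / (2 - c)"
  shows "c + \<epsilon> \<le> 1 / (2 - c) + \<epsilon>" "\<epsilon> \<le> 1 - c"
proof -
  have "c * (2 - c) = 1 - (1 - c)\<^sup>2" by (simp add: power2_eq_square algebra_simps)
  then show "c + \<epsilon> \<le> 1 / (2 - c) + \<epsilon>" using assms by (simp add: le_divide_eq)
  show "\<epsilon> \<le> 1 - c" using assms divide_left_mono[of 1 "2 - c" "1 - c"] by simp
qed

lemma abs_poly_le_near_tiny_set: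
  fixes P :: "real poly" and E :: "real set"
  assumes split: "degree_split_constants \<delta>0 c0 \<epsilon> K \<eta>" and \<eta>: "\<eta> \<le> 1"
    and \<delta>: "\<delta>0 \<le> \<delta>" and c: "c0 \<le> c" "c < 1" and \<epsilon>: "\<epsilon> < (1 - c) / (2 - c)"
    and deg: "degree P \<le> n" and P1: "\<And>y. y \<in> {-1..1} \<Longrightarrow> \<bar>poly P y\<bar> \<le> 1"
    and E: "E \<in> lmeasurable" "E \<noteq> {}" "E \<subseteq> {a..b}"
    and PE: "\<And>y. y \<in> E \<Longrightarrow> \<bar>poly P y\<bar> \<le> exp (- \<delta> * real n)"
    and tiny: "measure lebesgue E < (\<eta> / 13) powr (4 / \<epsilon>)" "measure lebesgue E < exp (- max (10 / \<epsilon>) 2)"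
    and ab: "-1 \<le> a" "b \<le> 1" "b - a \<le> measure lebesgue E powr (1 / (2 - c) + \<epsilon>)"
    and x: "x \<in> {a..b}"
  shows "\<bar>poly P x\<bar> \<le> exp (- c * \<delta> * real n)"
proof -
  interpret degree_split_constants \<delta>0 c0 \<epsilon> K \<eta> by (rule split)
  define m where "m = measure lebesgue E"
  have c_pos: "0 < c" using c c0_pos by simp
  have "c * (\<delta> * real n) \<le> 1 * (\<delta> * real n)" using c \<delta> \<delta>0_pos by (intro mult_right_mono) auto
  then have decay: "exp (- \<delta> * real n) \<le> exp (- c * \<delta> * real n)" by simp
  have "m \<le> measure lebesgue {a..b}" unfolding m_def using E by (intro measure_mono_fmeasurable) auto
  moreover obtain e where e: "e \<in> E" using E(2) by blast
  ultimately have m_ab: "m \<le> b - a" using E(3) by auto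
  show ?thesis
  proof (cases "m = 0")
    case True
    \<comment> \<open>A null set forces the interval to degenerate to the point \<open>x\<close>, which then lies in \<open>E\<close>.\<close>
    then have "x = e" using ab(3) x e E(3) by (force simp: m_def)
    then show ?thesis using order_trans[OF PE[OF e] decay] by simp
  next
    case False
    then have m: "0 < m" by (simp add: m_def order_less_le)
    define p where "p = 1 / (2 - c) + \<epsilon>"
    note gap = exponent_gap[OF c_pos c(2) \<epsilon>, folded p_def]
    note tiny_m = tiny_measure_bounds[OF m tiny[folded m_def] \<epsilon>_pos \<eta>_nonneg]
    have "b - a \<le> m powr p" using ab(3) by (simp add: m_def p_def)
    note exponents = small_set_exponents[OF m tiny_m(1) m_ab this gap(1) _ \<epsilon>_pos tiny_m(4) \<eta>]
    define d W u g where "d = m powr (\<epsilon> / 2)" and "W = 2 * exp 1 * (b - a) / m" and "u = (b - a) / d"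
      and "g = 4 * (d + (b - a)) + sqrt (3 * (4 * (d + (b - a))))"
    have d: "0 < d" "d \<le> 1 / 8" "b - a \<le> d" using exponents c_pos m by (simp_all add: d_def)
    have "0 \<le> g" using d m_ab m by (simp add: g_def)
    with exponents c_pos obtain k where "k \<le> n"
      and k: "exp (- \<delta> * real n) * W ^ k * exp (real n * u)
        + (if k < n then u ^ (k + 1) * exp (real n * g) else 0) \<le> exp (- c * \<delta> * real n)"
      using exists_degree_split[OF \<delta> c gap(2) tiny_m(2,3), of W u g n]
      unfolding d_def W_def u_def g_def by auto
    have "\<bar>poly P x\<bar> \<le> exp (- \<delta> * real n) * W ^ k * exp (real n * u)
        + (if k < n then u ^ (k + 1) * exp (real n * g) else 0)"
      using abs_poly_le_near_small_set[OF deg \<open>k \<le> n\<close> E(1,3) _ PE P1 ab(1,2) d x] m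
      unfolding W_def u_def g_def m_def by simp
    with k show ?thesis by linarith
  qed
qed

theorem mainTheorem4:
  fixes \<delta>0 c0 \<epsilon> :: real
  assumes "\<delta>0 > 0" and "0 < c0" and "c0 < 1" and "\<epsilon> > 0"
  shows "\<exists>\<kappa>>0. \<forall>(n::nat) (P::real poly) (\<delta>::real) (c::real) (E::real set) (I::real set).
     degree P \<le> n \<longrightarrow>
     unif_norm P {-1..1} \<le> 1 \<longrightarrow>
     \<delta> \<ge> \<delta>0 \<longrightarrow> c0 \<le> c \<longrightarrow> c < 1 \<longrightarrow>
     \<epsilon> < (1 - c) / (2 - c) \<longrightarrow>
     E \<in> sets lebesgue \<longrightarrow> E \<noteq> {} \<longrightarrow> E \<subseteq> {-1..1} \<longrightarrow>
     measure lebesgue E < \<kappa> \<longrightarrow>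
     unif_norm P E \<le> exp (- \<delta> * real n) \<longrightarrow>
     is_interval I \<longrightarrow> E \<subseteq> I \<longrightarrow> I \<subseteq> {-1..1} \<longrightarrow>
     measure lebesgue I \<le> measure lebesgue E powr (1 / (2 - c) + \<epsilon>) \<longrightarrow>
     unif_norm P I \<le> exp (- c * \<delta> * real n)"
proof -
  obtain K \<eta> where split: "degree_split_constants \<delta>0 c0 \<epsilon> K \<eta>" and \<eta>: "0 < \<eta>" "\<eta> \<le> 1"
    using exists_degree_split_constants assms by metis
  define \<kappa> where "\<kappa> = min ((\<eta> / 13) powr (4 / \<epsilon>)) (exp (- max (10 / \<epsilon>) 2))"
  show ?thesis
  proof (intro exI[of _ \<kappa>] conjI allI impI)
    show "0 < \<kappa>" using \<eta> by (simp add: \<kappa>_def)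
    fix n P \<delta> c E and I :: "real set"
    assume deg: "degree P \<le> n" and P1: "unif_norm P {-1..1} \<le> 1" and \<delta>: "\<delta> \<ge> \<delta>0"
      and c: "c0 \<le> c" "c < 1" and \<epsilon>: "\<epsilon> < (1 - c) / (2 - c)"
      and E: "E \<in> sets lebesgue" "E \<noteq> {}" "E \<subseteq> {-1..1}" and tiny: "measure lebesgue E < \<kappa>"
      and PE: "unif_norm P E \<le> exp (- \<delta> * real n)"
      and I: "is_interval I" "E \<subseteq> I" "I \<subseteq> {-1..1}"
      and I_small: "measure lebesgue I \<le> measure lebesgue E powr (1 / (2 - c) + \<epsilon>)"
    obtain a b where ab: "I \<subseteq> {a..b}" "-1 \<le> a" "b \<le> 1" "b - a \<le> measure lebesgue I"
      using interval_subset_Icc_measure[OF I(1) _ I(3)] E(2) I(2) by blast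
    have "E \<in> lmeasurable" using E by (intro bounded_set_imp_lmeasurable bounded_subset[OF bounded_closed_interval])
    then show "unif_norm P I \<le> exp (- c * \<delta> * real n)"
      using E(2,3) I(2) ab I_small tiny
      by (intro unif_norm_le abs_poly_le_near_tiny_set[OF split \<eta>(2) \<delta> c \<epsilon> deg, where E = E and a = a and b = b]
          abs_poly_le_of_unif_norm_le[OF order.refl P1] abs_poly_le_of_unif_norm_le[OF E(3) PE])
        (auto simp: \<kappa>_def)
  qed
qed

end
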